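(* Given a set of $n$ distinct elements from a totally ordered universe (accessible only through pairwise comparisons) and integers $i,j\ge 1$ with $i+j+2(i+j)^{3/4}\le n$, there is a randomized comparison-based algorithm that always outputs an $(i,j)$-mediocre element and whose expected number of comparisons is $(i+j)+O\big((i+j)^{3/4}\big)$ as $i+j\to\infty$.
   Context: For nonnegative integers $i,j$, an element of a totally ordered set $S$ of $n$ elements is called $(i,j)$-mediocre if it is neither among the $i$ largest nor among the $j$ smallest elements of $S$. The expectation is over the algorithm's internal randomness, for the worst-case input. *)

theory Defs
  imports "HOL-Probability.Probability"
begin

text \<open>The input consists of n elements indexed 0..n-1; the total order
 on them is given by a rank permutation p of {..<n} (element k has rank p k). A randomized algorithm is a probability distribution
 over decision trees (its internal randomness).\<close>

datatype dtree = Leaf nat | Cmp nat nat dtree dtree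

fun run :: "dtree \<Rightarrow> (nat \<Rightarrow> nat) \<Rightarrow> nat" where
  "run (Leaf k) p = k"
| "run (Cmp a b l r) p = (if p a < p b then run l p else run r p)"

fun cost :: "dtree \<Rightarrow> (nat \<Rightarrow> nat) \<Rightarrow> nat" where
  "cost (Leaf k) p = 0"
| "cost (Cmp a b l r) p = Suc (if p a < p b then cost l p else cost r p)"

fun wf_tree :: "nat \<Rightarrow> dtree \<Rightarrow> bool" where
  "wf_tree n (Leaf k) = (k < n)"
| "wf_tree n (Cmp a b l r) = (a < n \<and> b < n \<and> wf_tree n l \<and> wf_tree n r)"

definition mediocre :: "nat \<Rightarrow> nat \<Rightarrow> 'a::linorder set \<Rightarrow> 'a \<Rightarrow> bool" where
  "mediocre i j S x \<longleftrightarrow> x \<in> S \<and> i \<le> card {y\<in>S. x < y} \<and> j \<le> card {y\<in>S. y < x}"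

end

(*
  Let K = i + j and g = floor (K^(3/4)). An element that is (i,j)-mediocre among the first
  m = K + 1 + g inputs is (i,j)-mediocre among all n, so only these m elements are used.
  Draw s = ceil (K^(5/8)) of them uniformly with replacement, sort the sample by binary insertion
  (O(s log s) comparisons) and take the sample element at position t ~ s (j + g/2) / m, whose
  expected rank in the pool lies at distance about g/2 from both forbidden ends. Comparing it
  with all m pool elements (m comparisons) certifies whether it is mediocre; only if it is not,
  the pool is sorted completely (O(m log m)). By Hoeffding's inequality the pivot fails with
  probability at most 2 exp (- s g^2 / (2 m^2)) = exp (- Omega (K^(1/8))), so the expected cost is
  m + O(K^(5/8) log K) + o(1) = K + O(K^(3/4)).
*)
theory Submission
  imports Defs "HOL-Library.Log_Nat" "HOL-Real_Asymp.Real_Asymp"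
begin

section \<open>Comparison programs\<close>

text \<open>Decision trees with arbitrary values at the leaves. Unlike \<^typ>\<open>dtree\<close> they can be
  composed sequentially (\<open>bind_prog\<close>), which is how the algorithm is assembled.\<close>

datatype 'a cmp_prog = Return 'a | Compare nat nat "'a cmp_prog" "'a cmp_prog"

fun bind_prog :: "'a cmp_prog \<Rightarrow> ('a \<Rightarrow> 'b cmp_prog) \<Rightarrow> 'b cmp_prog" where
  "bind_prog (Return x) f = f x"
| "bind_prog (Compare a b l r) f = Compare a b (bind_prog l f) (bind_prog r f)"

fun eval_prog :: "'a cmp_prog \<Rightarrow> (nat \<Rightarrow> nat) \<Rightarrow> 'a" where
  "eval_prog (Return x) p = x"
| "eval_prog (Compare a b l r) p = (if p a < p b then eval_prog l p else eval_prog r p)"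

fun cost_prog :: "'a cmp_prog \<Rightarrow> (nat \<Rightarrow> nat) \<Rightarrow> nat" where
  "cost_prog (Return x) p = 0"
| "cost_prog (Compare a b l r) p = Suc (if p a < p b then cost_prog l p else cost_prog r p)"

text \<open>As for \<^const>\<open>wf_tree\<close>, the invariant must hold at every leaf, reachable or not.\<close>

fun valid_prog :: "nat \<Rightarrow> ('a \<Rightarrow> bool) \<Rightarrow> 'a cmp_prog \<Rightarrow> bool" where
  "valid_prog n Q (Return x) = Q x"
| "valid_prog n Q (Compare a b l r) = (a < n \<and> b < n \<and> valid_prog n Q l \<and> valid_prog n Q r)"

fun tree_of_prog :: "nat cmp_prog \<Rightarrow> dtree" where
  "tree_of_prog (Return x) = Leaf x"
| "tree_of_prog (Compare a b l r) = Cmp a b (tree_of_prog l) (tree_of_prog r)"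

lemma eval_bind_prog [simp]: "eval_prog (bind_prog m f) p = eval_prog (f (eval_prog m p)) p"
  by (induction m) auto

lemma cost_bind_prog [simp]:
  "cost_prog (bind_prog m f) p = cost_prog m p + cost_prog (f (eval_prog m p)) p"
  by (induction m) auto

lemma valid_bind_prog:
  "valid_prog n Q m \<Longrightarrow> (\<And>x. Q x \<Longrightarrow> valid_prog n R (f x)) \<Longrightarrow> valid_prog n R (bind_prog m f)"
  by (induction m) auto

lemma eval_map_prog [simp]: "eval_prog (map_cmp_prog f m) p = f (eval_prog m p)"
  by (induction m) auto

lemma cost_map_prog [simp]: "cost_prog (map_cmp_prog f m) p = cost_prog m p"
  by (induction m) auto

lemma valid_map_prog:
  "valid_prog n Q m \<Longrightarrow> (\<And>x. Q x \<Longrightarrow> R (f x)) \<Longrightarrow> valid_prog n R (map_cmp_prog f m)"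
  by (induction m) auto

lemma run_tree_of_prog [simp]: "run (tree_of_prog m) p = eval_prog m p"
  by (induction m) auto

lemma cost_tree_of_prog [simp]: "cost (tree_of_prog m) p = cost_prog m p"
  by (induction m) auto

lemma wf_tree_of_prog: "valid_prog n (\<lambda>x. x < n) m \<Longrightarrow> wf_tree n (tree_of_prog m)"
  by (induction m) auto

section \<open>Binary insertion sort\<close>

lemma insort_key_append_left:
  "ys \<noteq> [] \<Longrightarrow> f x \<le> f (hd ys) \<Longrightarrow> insort_key f x (xs @ ys) = insort_key f x xs @ ys"
  by (induction xs) (auto simp: neq_Nil_conv)

lemma insort_key_append_right:
  "\<forall>a\<in>set xs. f a < f x \<Longrightarrow> insort_key f x (xs @ ys) = xs @ insort_key f x ys"
  by (induction xs) auto

text \<open>The comparison is oriented so that ties send \<open>x\<close> to the left half; then the result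
  is exactly \<^const>\<open>insort_key\<close>, which inserts before equal keys.\<close>

function binary_insert :: "nat \<Rightarrow> nat list \<Rightarrow> nat list cmp_prog" where
  "binary_insert x ys = (if ys = [] then Return [x] else
     (let h = length ys div 2 in
      Compare (ys ! h) x
        (map_cmp_prog (\<lambda>r. take (Suc h) ys @ r) (binary_insert x (drop (Suc h) ys)))
        (map_cmp_prog (\<lambda>r. r @ drop h ys) (binary_insert x (take h ys)))))"
  by auto
termination by (relation "Wellfounded.measure (\<lambda>(x, ys). length ys)") auto

declare binary_insert.simps [simp del]

lemma binary_insert_Nil [simp]: "binary_insert x [] = Return [x]"
  by (subst binary_insert.simps) simp

lemma binary_insert_nonempty:
  assumes "ys \<noteq> []" and "h = length ys div 2"
  shows "binary_insert x ys = Compare (ys ! h) x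
    (map_cmp_prog (\<lambda>r. take (Suc h) ys @ r) (binary_insert x (drop (Suc h) ys)))
    (map_cmp_prog (\<lambda>r. r @ drop h ys) (binary_insert x (take h ys)))"
  using assms by (subst binary_insert.simps) (simp only: Let_def if_False)

lemma eval_binary_insert:
  "sorted (map p ys) \<Longrightarrow> eval_prog (binary_insert x ys) p = insort_key p x ys"
proof (induction x ys rule: binary_insert.induct)
  case (1 x ys)
  show ?case
  proof (cases "ys = []")
    case True
    then show ?thesis by simp
  next
    case False
    define h where "h = length ys div 2"
    have h: "h < length ys"
      using False by (simp add: h_def)
    have "sorted (map p (take h ys))" and "sorted (map p (drop (Suc h) ys))"
      using "1.prems" by (metis take_map sorted_wrt_take, metis drop_map sorted_wrt_drop)
    note sorted_parts = this
    have sorted_nth: "p (ys ! a) \<le> p (ys ! b)" if "a \<le> b" "b < length ys" for a b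
      using sorted_nth_mono[OF "1.prems", of a b] that by simp
    show ?thesis
    proof (cases "p (ys ! h) < p x")
      case True
      have "p a < p x" if a: "a \<in> set (take (Suc h) ys)" for a
      proof -
        obtain k where "k \<le> h" "a = ys ! k"
          using a h by (auto simp: in_set_conv_nth less_Suc_eq_le)
        then show ?thesis
          using sorted_nth[of k h] h True by simp
      qed
      then have "insort_key p x ys = take (Suc h) ys @ insort_key p x (drop (Suc h) ys)"
        using insort_key_append_right[of "take (Suc h) ys" p x "drop (Suc h) ys"] by simp
      then show ?thesis
        using "1.IH"(1)[OF False h_def sorted_parts(2)] True binary_insert_nonempty[OF False h_def, of x]
        by simp
    next
      case False2: False
      have "drop h ys \<noteq> []" and "hd (drop h ys) = ys ! h"
        using h by (simp_all add: hd_drop_conv_nth)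
      then have "insort_key p x ys = insort_key p x (take h ys) @ drop h ys"
        using False2 insort_key_append_left[of "drop h ys" p x "take h ys"] by simp
      then show ?thesis
        using "1.IH"(2)[OF False h_def sorted_parts(1)] False2 binary_insert_nonempty[OF False h_def, of x]
        by simp
    qed
  qed
qed

lemma cost_binary_insert: "cost_prog (binary_insert x ys) p \<le> floorlog 2 (length ys)"
proof (induction x ys rule: binary_insert.induct)
  case (1 x ys)
  show ?case
  proof (cases "ys = []")
    case True
    then show ?thesis by simp
  next
    case False
    define h where "h = length ys div 2"
    have "length ys - Suc h \<le> h"
      by (simp add: h_def)
    then have "cost_prog (binary_insert x (drop (Suc h) ys)) p \<le> floorlog 2 h"
      using "1.IH"(1)[OF False h_def] floorlog_mono[of "length ys - Suc h" h 2] by simp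
    moreover have "cost_prog (binary_insert x (take h ys)) p \<le> floorlog 2 h"
      using "1.IH"(2)[OF False h_def] by (simp add: h_def)
    moreover have "floorlog 2 (length ys) = Suc (floorlog 2 h)"
      using False by (subst compute_floorlog) (simp add: h_def)
    ultimately show ?thesis
      unfolding binary_insert_nonempty[OF False h_def, of x] by simp
  qed
qed

lemma valid_binary_insert:
  "x < n \<Longrightarrow> set ys \<subseteq> {..<n} \<Longrightarrow>
    valid_prog n (\<lambda>r. mset r = add_mset x (mset ys)) (binary_insert x ys)"
proof (induction x ys rule: binary_insert.induct)
  case (1 x ys)
  show ?case
  proof (cases "ys = []")
    case True
    then show ?thesis by simp
  next
    case False
    define h where "h = length ys div 2"
    have "ys ! h \<in> set ys"
      using False by (simp add: h_def)
    then have "ys ! h < n"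
      using "1.prems" by auto
    moreover have "valid_prog n (\<lambda>r. mset r = add_mset x (mset ys))
        (map_cmp_prog (\<lambda>r. take (Suc h) ys @ r) (binary_insert x (drop (Suc h) ys)))"
    proof (rule valid_map_prog)
      show "valid_prog n (\<lambda>r. mset r = add_mset x (mset (drop (Suc h) ys)))
          (binary_insert x (drop (Suc h) ys))"
        using "1.IH"(1)[OF False h_def] "1.prems" by (meson order_trans set_drop_subset)
    qed (metis append_take_drop_id mset_append union_mset_add_mset_right)
    moreover have "valid_prog n (\<lambda>r. mset r = add_mset x (mset ys))
        (map_cmp_prog (\<lambda>r. r @ drop h ys) (binary_insert x (take h ys)))"
    proof (rule valid_map_prog)
      show "valid_prog n (\<lambda>r. mset r = add_mset x (mset (take h ys))) (binary_insert x (take h ys))"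
        using "1.IH"(2)[OF False h_def] "1.prems" by (meson order_trans set_take_subset)
    qed (metis append_take_drop_id mset_append union_mset_add_mset_left)
    ultimately show ?thesis
      using "1.prems" by (simp add: binary_insert_nonempty[OF False h_def, of x])
  qed
qed

primrec insertion_sort :: "nat list \<Rightarrow> nat list cmp_prog" where
  "insertion_sort [] = Return []"
| "insertion_sort (x # xs) = bind_prog (insertion_sort xs) (binary_insert x)"

lemma eval_insertion_sort [simp]: "eval_prog (insertion_sort xs) p = sort_key p xs"
  by (induction xs) (simp_all add: eval_binary_insert)

lemma cost_insertion_sort:
  "cost_prog (insertion_sort xs) p \<le> length xs * floorlog 2 (length xs)"
proof (induction xs)
  case Nil
  then show ?case by simp
next
  case (Cons x xs)
  have "cost_prog (binary_insert x (sort_key p xs)) p \<le> floorlog 2 (Suc (length xs))"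
    using cost_binary_insert[of x "sort_key p xs" p] floorlog_mono[of "length xs" "Suc (length xs)" 2]
    by simp
  moreover have "length xs * floorlog 2 (length xs) \<le> length xs * floorlog 2 (Suc (length xs))"
    by (intro mult_le_mono2 floorlog_mono) simp
  moreover have "cost_prog (insertion_sort (x # xs)) p
      = cost_prog (insertion_sort xs) p + cost_prog (binary_insert x (sort_key p xs)) p"
    by simp
  ultimately show ?case
    using Cons.IH unfolding length_Cons mult_Suc by linarith
qed

lemma valid_insertion_sort:
  "set xs \<subseteq> {..<n} \<Longrightarrow> valid_prog n (\<lambda>r. mset r = mset xs) (insertion_sort xs)"
proof (induction xs)
  case Nil
  then show ?case by simp
next
  case (Cons x xs)
  show ?case
    unfolding insertion_sort.simps mset.simps
  proof (rule valid_bind_prog)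
    show "valid_prog n (\<lambda>r. mset r = mset xs) (insertion_sort xs)"
      using Cons by simp
    show "valid_prog n (\<lambda>r. mset r = add_mset x (mset xs)) (binary_insert x ys)"
      if "mset ys = mset xs" for ys
    proof -
      have "set ys \<subseteq> {..<n}"
        using Cons.prems mset_eq_setD[OF that] by simp
      then show ?thesis
        using valid_binary_insert[of x n ys] Cons.prems unfolding that by simp
    qed
  qed
qed

primrec count_smaller :: "nat \<Rightarrow> nat list \<Rightarrow> nat cmp_prog" where
  "count_smaller x [] = Return 0"
| "count_smaller x (y # ys) =
     Compare y x (map_cmp_prog Suc (count_smaller x ys)) (count_smaller x ys)"

lemma eval_count_smaller [simp]:
  "eval_prog (count_smaller x ys) p = length (filter (\<lambda>y. p y < p x) ys)"
  by (induction ys) auto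

lemma cost_count_smaller [simp]: "cost_prog (count_smaller x ys) p = length ys"
  by (induction ys) auto

lemma valid_count_smaller:
  "x < n \<Longrightarrow> set ys \<subseteq> {..<n} \<Longrightarrow> valid_prog n (\<lambda>_. True) (count_smaller x ys)"
  by (induction ys) (auto intro: valid_map_prog[where Q = "\<lambda>_. True"])

section \<open>Ranks\<close>

definition num_below :: "('a \<Rightarrow> 'b::linorder) \<Rightarrow> 'a set \<Rightarrow> 'a \<Rightarrow> nat" where
  "num_below f S x = card {y \<in> S. f y < f x}"

definition num_above :: "('a \<Rightarrow> 'b::linorder) \<Rightarrow> 'a set \<Rightarrow> 'a \<Rightarrow> nat" where
  "num_above f S x = card {y \<in> S. f x < f y}"

lemma num_above_conv_num_below:
  fixes p :: "'a \<Rightarrow> nat"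
  shows "num_above p S x = num_below (\<lambda>y. - int (p y)) S x"
  by (simp add: num_above_def num_below_def)

lemma num_below_mono: "finite S \<Longrightarrow> f x \<le> f y \<Longrightarrow> num_below f S x \<le> num_below f S y"
  unfolding num_below_def by (rule card_mono) auto

lemma num_above_antimono: "finite S \<Longrightarrow> f x \<le> f y \<Longrightarrow> num_above f S y \<le> num_above f S x"
  unfolding num_above_def by (rule card_mono) auto

lemma num_below_strict_mono:
  "finite S \<Longrightarrow> x \<in> S \<Longrightarrow> f x < f y \<Longrightarrow> num_below f S x < num_below f S y"
  unfolding num_below_def by (rule psubset_card_mono) auto

lemma inj_on_num_below:
  assumes "finite S" and "inj_on f S"
  shows "inj_on (num_below f S) S"
proof (rule inj_onI)
  fix x y
  assume "x \<in> S" "y \<in> S" "num_below f S x = num_below f S y"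
  then have "f x = f y"
    using num_below_strict_mono[OF assms(1), of x f y] num_below_strict_mono[OF assms(1), of y f x]
    by (metis less_irrefl linorder_neqE)
  then show "x = y"
    using assms(2) \<open>x \<in> S\<close> \<open>y \<in> S\<close> by (simp add: inj_on_eq_iff)
qed

lemma card_num_below_less:
  assumes "finite S" and "inj_on f S"
  shows "card {x \<in> S. num_below f S x < j} \<le> j"
proof -
  have "card {x \<in> S. num_below f S x < j} = card (num_below f S ` {x \<in> S. num_below f S x < j})"
    by (rule card_image[symmetric], rule inj_on_subset[OF inj_on_num_below[OF assms]]) auto
  also have "\<dots> \<le> card {..<j}"
    by (rule card_mono) auto
  finally show ?thesis
    by simp
qed

lemma num_below_add_num_above:
  assumes "finite S" and "inj_on f S" and "x \<in> S"
  shows "num_below f S x + num_above f S x = card S - 1"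
proof -
  have "S - {x} = {y \<in> S. f y < f x} \<union> {y \<in> S. f x < f y}"
    using assms(2,3) unfolding inj_on_def by auto (metis linorder_neqE)
  moreover have "card ({y \<in> S. f y < f x} \<union> {y \<in> S. f x < f y})
      = num_below f S x + num_above f S x"
    unfolding num_below_def num_above_def by (rule card_Un_disjoint) (use assms(1) in auto)
  ultimately have "card (S - {x}) = num_below f S x + num_above f S x"
    by simp
  then show ?thesis
    using assms(1,3) by simp
qed

lemma mediocre_image_iff:
  assumes "inj_on f S" and "x \<in> S"
  shows "mediocre i j (f ` S) (f x) \<longleftrightarrow> i \<le> num_above f S x \<and> j \<le> num_below f S x"
proof -
  have "{y \<in> f ` S. f x < y} = f ` {y \<in> S. f x < f y}" and "{y \<in> f ` S. y < f x} = f ` {y \<in> S. f y < f x}"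
    by auto
  moreover have "card (f ` {y \<in> S. f x < f y}) = num_above f S x"
    and "card (f ` {y \<in> S. f y < f x}) = num_below f S x"
    unfolding num_above_def num_below_def
    by (intro card_image inj_on_subset[OF assms(1)], blast)+
  ultimately show ?thesis
    using assms(2) by (simp add: mediocre_def)
qed

lemma mediocre_mono:
  assumes "mediocre i j S x" and "S \<subseteq> T" and "finite T"
  shows "mediocre i j T x"
proof -
  have "card {y \<in> S. x < y} \<le> card {y \<in> T. x < y}" and "card {y \<in> S. y < x} \<le> card {y \<in> T. y < x}"
    using assms(2,3) by (auto intro!: card_mono)
  then show ?thesis
    using assms(1,2) unfolding mediocre_def by auto
qed

lemma mediocre_if_num_below:
  assumes "finite S" and "inj_on f S" and "x \<in> S"
    and "j \<le> num_below f S x" and "i + num_below f S x < card S"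
  shows "mediocre i j (f ` S) (f x)"
  using assms num_below_add_num_above[OF assms(1-3)] by (simp add: mediocre_image_iff)

lemma num_below_nth_sorted:
  assumes sorted: "sorted (map f xs)" and "distinct xs" and "inj_on f (set xs)" and k: "k < length xs"
  shows "num_below f (set xs) (xs ! k) = k"
proof -
  have mono: "f (xs ! a) \<le> f (xs ! b)" if "a \<le> b" "b < length xs" for a b
    using sorted_nth_mono[OF sorted, of a b] that by simp
  have "{y \<in> set xs. f y < f (xs ! k)} = set (take k xs)"
  proof (intro equalityI subsetI)
    fix y
    assume "y \<in> {y \<in> set xs. f y < f (xs ! k)}"
    then obtain l where l: "l < length xs" "y = xs ! l" "f (xs ! l) < f (xs ! k)"
      by (auto simp: in_set_conv_nth)
    then have "l < k"
      using mono[of k l] by (meson leD le_less_linear)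
    then show "y \<in> set (take k xs)"
      using l k by (auto simp: in_set_conv_nth intro!: exI[of _ l])
  next
    fix y
    assume "y \<in> set (take k xs)"
    then obtain l where l: "l < k" "y = xs ! l"
      using k by (auto simp: in_set_conv_nth)
    then have "f y \<noteq> f (xs ! k)"
      using assms(2,3) k by (simp add: inj_on_eq_iff nth_eq_iff_index_eq)
    then show "y \<in> {y \<in> set xs. f y < f (xs ! k)}"
      using mono[of l k] l k by simp
  qed
  then show ?thesis
    using assms(2) k by (simp add: num_below_def distinct_card)
qed

lemma nth_ge_if_few_less:
  fixes g :: "'a \<Rightarrow> 'b::linorder"
  assumes sorted: "sorted (map g ys)" and t: "t < length ys"
    and few: "length (filter (\<lambda>y. g y < c) ys) \<le> t"
  shows "c \<le> g (ys ! t)"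
proof (rule ccontr)
  assume "\<not> c \<le> g (ys ! t)"
  then have "g y < c" if "y \<in> set (take (Suc t) ys)" for y
  proof -
    obtain l where "l \<le> t" "y = ys ! l"
      using \<open>y \<in> set (take (Suc t) ys)\<close> t by (auto simp: in_set_conv_nth less_Suc_eq_le)
    then show ?thesis
      using sorted_nth_mono[OF sorted, of l t] t \<open>\<not> c \<le> g (ys ! t)\<close> by simp
  qed
  then have "Suc t = length (filter (\<lambda>y. g y < c) (take (Suc t) ys))"
    using t by simp
  also have "\<dots> \<le> length (filter (\<lambda>y. g y < c) ys)"
    by (metis append_take_drop_id filter_append length_append le_add1)
  finally show False
    using few by simp
qed

lemma sorted_nth_num_below_num_above:
  fixes p :: "'a \<Rightarrow> 'b::linorder"
  assumes "finite S" and sorted: "sorted (map p ys)" and t: "t < length ys"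
    and low: "length (filter (\<lambda>y. num_below p S y < j) ys) \<le> t"
    and high: "length (filter (\<lambda>y. num_above p S y < i) ys) < length ys - t"
  shows "j \<le> num_below p S (ys ! t) \<and> i \<le> num_above p S (ys ! t)"
proof
  have "sorted_wrt (\<lambda>a b. p a \<le> p b) ys"
    using sorted by (simp add: sorted_wrt_map)
  then have "sorted_wrt (\<lambda>a b. num_below p S a \<le> num_below p S b) ys"
    and "sorted_wrt (\<lambda>a b. num_above p S b \<le> num_above p S a) ys"
    using assms(1) by (auto elim!: sorted_wrt_mono_rel[rotated] simp: num_below_mono num_above_antimono)
  then have below: "sorted (map (num_below p S) ys)" and above: "sorted (map (num_above p S) (rev ys))"
    by (simp_all add: sorted_wrt_map sorted_wrt_rev flip: rev_map)
  show "j \<le> num_below p S (ys ! t)"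
    using nth_ge_if_few_less[OF below t low] .
  have "length (filter (\<lambda>y. num_above p S y < i) (rev ys)) \<le> length ys - Suc t"
    using high by (simp flip: rev_filter)
  then have "i \<le> num_above p S (rev ys ! (length ys - Suc t))"
    using nth_ge_if_few_less[OF above] t by simp
  then show "i \<le> num_above p S (ys ! t)"
    using t by (simp add: rev_nth)
qed

section \<open>Selection with a sampled pivot\<close>

definition select_prog :: "nat \<Rightarrow> nat \<Rightarrow> nat \<Rightarrow> nat \<Rightarrow> nat list \<Rightarrow> nat cmp_prog" where
  "select_prog m i j t xs =
     bind_prog (insertion_sort xs) (\<lambda>ys.
     bind_prog (count_smaller (ys ! t) [0..<m]) (\<lambda>c.
       if j \<le> c \<and> i + c < m then Return (ys ! t)
       else map_cmp_prog (\<lambda>zs. zs ! j) (insertion_sort [0..<m])))"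

lemma eval_count_smaller_upt:
  "eval_prog (count_smaller x [0..<m]) p = num_below p {..<m} x"
proof -
  have "{k. k < m \<and> p ([0..<m] ! k) < p x} = {y \<in> {..<m}. p y < p x}"
    by auto
  then show ?thesis
    by (simp add: num_below_def length_filter_conv_card)
qed

lemma eval_select_prog:
  "eval_prog (select_prog m i j t xs) p =
    (let x = sort_key p xs ! t; c = num_below p {..<m} x
     in if j \<le> c \<and> i + c < m then x else sort_key p [0..<m] ! j)"
  by (simp add: select_prog_def eval_count_smaller_upt Let_def del: eval_count_smaller)

lemma cost_select_prog:
  "cost_prog (select_prog m i j t xs) p \<le> length xs * floorlog 2 (length xs) + m +
    (let c = num_below p {..<m} (sort_key p xs ! t)
     in if j \<le> c \<and> i + c < m then 0 else m * floorlog 2 m)"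
  using cost_insertion_sort[of xs p] cost_insertion_sort[of "[0..<m]" p]
  by (simp add: select_prog_def eval_count_smaller_upt Let_def del: eval_count_smaller)

lemma valid_select_prog:
  assumes "set xs \<subseteq> {..<m}" and "t < length xs" and "j < m" and "m \<le> n"
  shows "valid_prog n (\<lambda>x. x < n) (select_prog m i j t xs)"
  unfolding select_prog_def
proof (rule valid_bind_prog[OF valid_insertion_sort])
  show "set xs \<subseteq> {..<n}"
    using assms(1,4) by auto
  fix ys :: "nat list"
  assume "mset ys = mset xs"
  then have pivot: "ys ! t < m"
    using assms(1,2) by (metis lessThan_iff nth_mem set_mset_mset size_mset subsetD)
  have "valid_prog n (\<lambda>x. x < n) (map_cmp_prog (\<lambda>zs. zs ! j) (insertion_sort [0..<m]))"
  proof (rule valid_map_prog[OF valid_insertion_sort])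
    show "set [0..<m] \<subseteq> {..<n}"
      using assms(4) by auto
    fix zs :: "nat list"
    assume "mset zs = mset [0..<m]"
    then have "zs ! j \<in> set [0..<m]"
      using assms(3) by (metis length_upt minus_nat.diff_0 nth_mem set_mset_mset size_mset)
    then show "zs ! j < n"
      using assms(4) by simp
  qed
  then show "valid_prog n (\<lambda>x. x < n) (bind_prog (count_smaller (ys ! t) [0..<m]) (\<lambda>c.
      if j \<le> c \<and> i + c < m then Return (ys ! t)
      else map_cmp_prog (\<lambda>zs. zs ! j) (insertion_sort [0..<m])))"
    using pivot assms(4) by (intro valid_bind_prog[OF valid_count_smaller]) auto
qed

lemma select_prog_mediocre:
  assumes inj: "inj_on p {..<m}" and "set xs \<subseteq> {..<m}" and "t < length xs" and "i + j < m"
  shows "mediocre i j (p ` {..<m}) (p (eval_prog (select_prog m i j t xs) p))"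
proof (cases "j \<le> num_below p {..<m} (sort_key p xs ! t)
    \<and> i + num_below p {..<m} (sort_key p xs ! t) < m")
  case True
  have "sort_key p xs ! t \<in> set xs"
    using assms(3) by (metis length_sort nth_mem set_sort)
  then show ?thesis
    using True assms(2) mediocre_if_num_below[OF _ inj, of "sort_key p xs ! t" j i]
    by (auto simp: eval_select_prog Let_def)
next
  case False
  define zs where "zs = sort_key p [0..<m]"
  have zs: "sorted (map p zs)" "distinct zs" "set zs = {..<m}" "length zs = m"
    by (simp_all add: zs_def atLeast_upt)
  then have "num_below p {..<m} (zs ! j) = j"
    using num_below_nth_sorted[of p zs j] inj assms(4) by simp
  moreover have "zs ! j \<in> {..<m}"
    using zs assms(4) nth_mem[of j zs] by simp
  moreover have "eval_prog (select_prog m i j t xs) p = zs ! j"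
    using False by (auto simp: eval_select_prog Let_def zs_def)
  ultimately show ?thesis
    using assms(4) mediocre_if_num_below[OF _ inj, of "zs ! j" j i] by simp
qed

text \<open>Samples on which the \<open>t\<close>-th smallest sample may fail the rank test of
  \<open>select_prog\<close>.\<close>

definition bad_samples ::
    "(nat \<Rightarrow> nat) \<Rightarrow> nat \<Rightarrow> nat \<Rightarrow> nat \<Rightarrow> nat \<Rightarrow> nat \<Rightarrow> nat list set" where
  "bad_samples p m i j s t =
     {xs. t < length (filter (\<lambda>y. num_below p {..<m} y < j) xs)} \<union>
     {xs. s - t \<le> length (filter (\<lambda>y. num_above p {..<m} y < i) xs)}"

lemma cost_select_prog_le:
  assumes inj: "inj_on p {..<m}" and xs: "set xs \<subseteq> {..<m}" "length xs = s" and t: "t < s"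
  shows "cost_prog (select_prog m i j t xs) p \<le> s * floorlog 2 s + m +
    (if xs \<in> bad_samples p m i j s t then m * floorlog 2 m else 0)"
proof (cases "xs \<in> bad_samples p m i j s t")
  case True
  then show ?thesis
    using cost_select_prog[of m i j t xs p] xs(2) by (simp add: Let_def split: if_splits)
next
  case False
  define ys where "ys = sort_key p xs"
  have filter_ys: "length (filter P ys) = length (filter P xs)" for P
    unfolding ys_def by (metis mset_filter mset_sort size_mset)
  have "j \<le> num_below p {..<m} (ys ! t) \<and> i \<le> num_above p {..<m} (ys ! t)"
    using False t xs(2) filter_ys
    by (intro sorted_nth_num_below_num_above) (auto simp: ys_def bad_samples_def)
  moreover have "ys ! t \<in> {..<m}"
    using xs t by (metis length_sort nth_mem set_sort subsetD ys_def)
  ultimately have "j \<le> num_below p {..<m} (ys ! t) \<and> i + num_below p {..<m} (ys ! t) < m"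
    using num_below_add_num_above[OF _ inj, of "ys ! t"] by auto
  then show ?thesis
    using False cost_select_prog[of m i j t xs p] xs(2) by (simp add: Let_def ys_def)
qed

section \<open>Expected cost\<close>

lemma nn_integral_measure_pmf_le_indicator_bound:
  fixes f :: "'a \<Rightarrow> real"
  assumes bound: "\<And>x. x \<in> set_pmf M \<Longrightarrow> f x \<le> a + (if x \<in> B then b else 0)"
    and "0 \<le> a" and "0 \<le> b"
  shows "(\<integral>\<^sup>+x. ennreal (f x) \<partial>measure_pmf M) \<le> ennreal (a + b * measure_pmf.prob M B)"
proof -
  have "ennreal (f x) \<le> ennreal a + ennreal b * indicator B x" if "x \<in> set_pmf M" for x
    using bound[OF that] assms(2,3) by (cases "x \<in> B") (simp_all flip: ennreal_plus add: ennreal_leI)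
  then have "(\<integral>\<^sup>+x. ennreal (f x) \<partial>measure_pmf M)
      \<le> (\<integral>\<^sup>+x. ennreal a + ennreal b * indicator B x \<partial>measure_pmf M)"
    by (intro nn_integral_mono_AE AE_pmfI)
  also have "\<dots> = ennreal a + ennreal b * emeasure (measure_pmf M) B"
    by (subst nn_integral_add) (simp_all add: nn_integral_cmult_indicator measure_pmf.emeasure_space_1)
  also have "\<dots> = ennreal (a + b * measure_pmf.prob M B)"
    using assms(2,3) by (simp add: measure_pmf.emeasure_eq_measure ennreal_plus ennreal_mult)
  finally show ?thesis .
qed

lemma replicate_pmf_map_pmf: "replicate_pmf n (map_pmf f q) = map_pmf (map f) (replicate_pmf n q)"
  by (induction n) (simp_all add: map_pmf_def bind_assoc_pmf bind_return_pmf)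

lemma map_pmf_of_set_eq_bernoulli_pmf:
  assumes "finite A" and "A \<noteq> {}"
  shows "map_pmf P (pmf_of_set A) = bernoulli_pmf (card {x \<in> A. P x} / card A)"
proof (rule pmf_eqI)
  fix b :: bool
  have card_A: "card A > 0"
    using assms by (simp add: card_gt_0_iff)
  have card_P: "card {x \<in> A. P x} \<le> card A"
    using assms(1) by (intro card_mono) auto
  have "pmf (map_pmf P (pmf_of_set A)) b = card (A \<inter> P -` {b}) / card A"
    using assms by (simp add: pmf_map measure_pmf_of_set)
  moreover have "card (A \<inter> P -` {False}) = card A - card {x \<in> A. P x}"
    using assms(1) by (subst card_Diff_subset[symmetric]) (auto intro: arg_cong[where f = card])
  ultimately show "pmf (map_pmf P (pmf_of_set A)) b = pmf (bernoulli_pmf (card {x \<in> A. P x} / card A)) b"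
    using card_A card_P
    by (cases b) (auto simp: of_nat_diff diff_divide_distrib intro!: arg_cong[where f = card])
qed

lemma map_pmf_count_replicate_pmf_of_set:
  assumes "finite A" and "A \<noteq> {}"
  shows "map_pmf (\<lambda>xs. length (filter P xs)) (replicate_pmf s (pmf_of_set A))
         = binomial_pmf s (card {x \<in> A. P x} / card A)"
proof -
  have "card {x \<in> A. P x} \<le> card A"
    using assms(1) by (intro card_mono) auto
  then have "card {x \<in> A. P x} / card A \<in> {0..1}"
    by (auto simp: divide_le_eq_1)
  then have "binomial_pmf s (card {x \<in> A. P x} / card A)
      = map_pmf (length \<circ> filter id) (replicate_pmf s (map_pmf P (pmf_of_set A)))"
    by (simp add: binomial_pmf_altdef map_pmf_of_set_eq_bernoulli_pmf[OF assms])
  also have "\<dots> = map_pmf (\<lambda>xs. length (filter P xs)) (replicate_pmf s (pmf_of_set A))"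
    by (simp add: replicate_pmf_map_pmf pmf.map_comp o_def filter_map)
  finally show ?thesis
    by simp
qed

lemma prob_count_replicate_pmf_of_set_ge:
  assumes "finite A" and "A \<noteq> {}" and "card {x \<in> A. P x} \<le> c" and "0 < s" and "0 \<le> \<epsilon>"
    and "real s * c / card A + \<epsilon> \<le> real a"
  shows "measure_pmf.prob (replicate_pmf s (pmf_of_set A)) {xs. a \<le> length (filter P xs)}
    \<le> exp (-2 * \<epsilon>\<^sup>2 / s)"
proof -
  define q where "q = card {x \<in> A. P x} / card A"
  have "card A > 0"
    using assms(1,2) by (simp add: card_gt_0_iff)
  have "card {x \<in> A. P x} \<le> card A"
    using assms(1) by (intro card_mono) auto
  then interpret binomial_distribution s q
    using \<open>card A > 0\<close> by unfold_locales (simp add: q_def divide_le_eq_1)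
  have "real s * q \<le> real s * c / card A"
    using assms(3) \<open>card A > 0\<close> unfolding q_def
    by (simp only: times_divide_eq_right[symmetric]) (intro divide_right_mono mult_left_mono, auto)
  then have margin: "\<epsilon> \<le> real a - real s * q"
    using assms(6) by simp
  have "measure_pmf.prob (replicate_pmf s (pmf_of_set A)) {xs. a \<le> length (filter P xs)}
      = measure_pmf.prob (binomial_pmf s q) {x. real s * q + (real a - real s * q) \<le> real x}"
    by (simp flip: map_pmf_count_replicate_pmf_of_set[OF assms(1,2)] add: q_def)
  also have "\<dots> \<le> exp (-2 * (real a - real s * q)\<^sup>2 / s)"
    using prob_ge[OF assms(4), of "real a - real s * q"] margin assms(5) by simp
  also have "\<dots> \<le> exp (-2 * \<epsilon>\<^sup>2 / s)"
    using margin assms(4,5) by (simp add: divide_right_mono power_mono)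
  finally show ?thesis .
qed

lemma prob_bad_samples_le:
  assumes inj: "inj_on p {..<m}" and m: "m = i + j + 1 + g" and s: "0 < s" and "t < s"
    and t: "real t \<le> real s * (j + g / 2) / m" "real s * (j + g / 2) / m \<le> real t + 1"
  shows "measure_pmf.prob (replicate_pmf s (pmf_of_set {..<m})) (bad_samples p m i j s t)
    \<le> 2 * exp (- (real s * (real g)\<^sup>2 / (2 * (real m)\<^sup>2)))"
proof -
  define R where "R = replicate_pmf s (pmf_of_set {..<m})"
  define \<epsilon> where "\<epsilon> = real s * g / (2 * m)"
  have "0 < m" "0 \<le> \<epsilon>"
    using m by (simp_all add: \<epsilon>_def)
  have "measure_pmf.prob R (bad_samples p m i j s t)
      \<le> measure_pmf.prob R {xs. Suc t \<le> length (filter (\<lambda>y. num_below p {..<m} y < j) xs)}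
        + measure_pmf.prob R {xs. s - t \<le> length (filter (\<lambda>y. num_above p {..<m} y < i) xs)}"
    unfolding bad_samples_def Suc_le_eq by (rule measure_Un_le) auto
  moreover have "measure_pmf.prob R {xs. Suc t \<le> length (filter (\<lambda>y. num_below p {..<m} y < j) xs)}
      \<le> exp (-2 * \<epsilon>\<^sup>2 / s)"
    unfolding R_def
  proof (rule prob_count_replicate_pmf_of_set_ge[of _ _ j])
    show "card {x \<in> {..<m}. num_below p {..<m} x < j} \<le> j"
      using card_num_below_less[of "{..<m}" p j] inj by simp
    show "real s * real j / real (card {..<m}) + \<epsilon> \<le> real (Suc t)"
      using t(2) \<open>0 < m\<close> by (simp add: \<epsilon>_def field_simps)
  qed (use s \<open>0 < m\<close> \<open>0 \<le> \<epsilon>\<close> in auto)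
  moreover have "measure_pmf.prob R {xs. s - t \<le> length (filter (\<lambda>y. num_above p {..<m} y < i) xs)}
      \<le> exp (-2 * \<epsilon>\<^sup>2 / s)"
    unfolding R_def
  proof (rule prob_count_replicate_pmf_of_set_ge[of _ _ i])
    have "inj_on (\<lambda>y. - int (p y)) {..<m}"
      using inj by (simp add: inj_on_def)
    then show "card {x \<in> {..<m}. num_above p {..<m} x < i} \<le> i"
      using card_num_below_less[of "{..<m}" "\<lambda>y. - int (p y)" i] by (simp add: num_above_conv_num_below)
    have "real s * real i / real (card {..<m}) + \<epsilon> = real s * (i + g / 2) / m"
      using \<open>0 < m\<close> by (simp add: \<epsilon>_def field_simps)
    also have "\<dots> \<le> real s * (i + 1 + g / 2) / m"
      by (intro divide_right_mono mult_left_mono) auto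
    also have "\<dots> = s - real s * (j + g / 2) / m"
      using \<open>0 < m\<close> m by (simp add: field_simps)
    finally have "real s * real i / real (card {..<m}) + \<epsilon> \<le> s - real s * (j + g / 2) / m" .
    then show "real s * real i / real (card {..<m}) + \<epsilon> \<le> real (s - t)"
      using t(1) \<open>t < s\<close> by (simp add: of_nat_diff)
  qed (use s \<open>0 < m\<close> \<open>0 \<le> \<epsilon>\<close> in auto)
  moreover have "2 * \<epsilon>\<^sup>2 / s = real s * (real g)\<^sup>2 / (2 * (real m)\<^sup>2)"
    using s by (simp add: \<epsilon>_def field_simps power2_eq_square)
  ultimately show ?thesis
    unfolding R_def by simp
qed

lemma expected_cost_select_prog:
  assumes inj: "inj_on p {..<m}" and m: "m = i + j + 1 + g" and s: "0 < s" and "t < s"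
    and t: "real t \<le> real s * (j + g / 2) / m" "real s * (j + g / 2) / m \<le> real t + 1"
  shows "(\<integral>\<^sup>+xs. ennreal (real (cost_prog (select_prog m i j t xs) p))
      \<partial>measure_pmf (replicate_pmf s (pmf_of_set {..<m})))
    \<le> ennreal (real (s * floorlog 2 s + m)
      + real (m * floorlog 2 m) * (2 * exp (- (real s * (real g)\<^sup>2 / (2 * (real m)\<^sup>2)))))"
proof -
  define R where "R = replicate_pmf s (pmf_of_set {..<m})"
  have "set_pmf (pmf_of_set {..<m}) = {..<m}"
    using m by (intro set_pmf_of_set) auto
  then have support: "set xs \<subseteq> {..<m}" "length xs = s" if "xs \<in> set_pmf R" for xs
    using that by (auto simp: R_def set_replicate_pmf)
  have "(\<integral>\<^sup>+xs. ennreal (real (cost_prog (select_prog m i j t xs) p)) \<partial>measure_pmf R)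
      \<le> ennreal (real (s * floorlog 2 s + m) + real (m * floorlog 2 m) *
          measure_pmf.prob R (bad_samples p m i j s t))"
  proof (rule nn_integral_measure_pmf_le_indicator_bound)
    fix xs
    assume "xs \<in> set_pmf R"
    then show "real (cost_prog (select_prog m i j t xs) p) \<le> real (s * floorlog 2 s + m)
        + (if xs \<in> bad_samples p m i j s t then real (m * floorlog 2 m) else 0)"
    proof -
      have "real (cost_prog (select_prog m i j t xs) p) \<le> real (s * floorlog 2 s + m
          + (if xs \<in> bad_samples p m i j s t then m * floorlog 2 m else 0))"
        using cost_select_prog_le[OF inj support \<open>t < s\<close>, of xs i j] \<open>xs \<in> set_pmf R\<close>
        by (simp only: of_nat_le_iff)
      then show ?thesis
        by (simp split: if_splits)
    qed
  qed simp_all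
  also have "\<dots> \<le> ennreal (real (s * floorlog 2 s + m)
      + real (m * floorlog 2 m) * (2 * exp (- (real s * (real g)\<^sup>2 / (2 * (real m)\<^sup>2)))))"
    unfolding R_def
    by (intro ennreal_leI add_left_mono mult_left_mono prob_bad_samples_le[OF inj m s \<open>t < s\<close> t]) simp
  finally show ?thesis
    unfolding R_def .
qed

lemma floorlog_le_log: "1 \<le> L \<Longrightarrow> real (floorlog 2 L) \<le> log 2 L + 1"
  by (auto simp: floorlog_def)

lemma mult_floorlog_le:
  assumes "1 \<le> L" and "real L \<le> x"
  shows "real (L * floorlog 2 L) \<le> x * (log 2 x + 1)"
proof -
  have "real (L * floorlog 2 L) \<le> real L * (log 2 L + 1)"
    using floorlog_le_log[OF assms(1)] by (simp add: mult_left_mono)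
  also have "\<dots> \<le> x * (log 2 x + 1)"
    using assms by (intro mult_mono) auto
  finally show ?thesis .
qed

section \<open>Choice of the parameters\<close>

definition gap :: "nat \<Rightarrow> nat" where
  "gap k = nat \<lfloor>real k powr (3/4)\<rfloor>"

definition sample_size :: "nat \<Rightarrow> nat" where
  "sample_size k = nat \<lceil>real k powr (5/8)\<rceil>"

definition pool_size :: "nat \<Rightarrow> nat \<Rightarrow> nat" where
  "pool_size i j = i + j + 1 + gap (i + j)"

text \<open>The pivot is the sample element whose expected rank in the pool is \<open>j + gap / 2\<close>.\<close>

definition pivot_index :: "nat \<Rightarrow> nat \<Rightarrow> nat" where
  "pivot_index i j =
     nat \<lfloor>real (sample_size (i + j)) * (j + gap (i + j) / 2) / pool_size i j\<rfloor>"

definition mediocre_alg :: "nat \<Rightarrow> nat \<Rightarrow> dtree pmf" where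
  "mediocre_alg i j = map_pmf (\<lambda>xs. tree_of_prog (select_prog (pool_size i j) i j (pivot_index i j) xs))
     (replicate_pmf (sample_size (i + j)) (pmf_of_set {..<pool_size i j}))"

lemma gap_bounds: "real k powr (3/4) - 1 \<le> gap k" "gap k \<le> real k powr (3/4)"
  by (simp_all add: gap_def)

lemma sample_size_bounds: "real k powr (5/8) \<le> sample_size k" "sample_size k \<le> real k powr (5/8) + 1"
  by (simp_all add: sample_size_def)

lemma pool_size_le:
  assumes "1 \<le> i + j" and "real (i + j) + 2 * real (i + j) powr (3/4) \<le> real n"
  shows "pool_size i j \<le> n"
proof -
  have "1 \<le> real (i + j) powr (3/4)"
    using assms(1) by (intro ge_one_powr_ge_zero) auto
  then show ?thesis
    using assms(2) gap_bounds(2)[of "i + j"] unfolding pool_size_def by linarith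
qed

lemma sample_size_pos: "1 \<le> k \<Longrightarrow> 0 < sample_size k"
  using sample_size_bounds(1)[of k] ge_one_powr_ge_zero[of "real k" "5/8"] by linarith

lemma pivot_index_bounds:
  "real (pivot_index i j) \<le> real (sample_size (i + j)) * (j + gap (i + j) / 2) / pool_size i j"
  "real (sample_size (i + j)) * (j + gap (i + j) / 2) / pool_size i j \<le> real (pivot_index i j) + 1"
  by (simp_all add: pivot_index_def)

lemma pivot_index_less:
  assumes "1 \<le> i + j"
  shows "pivot_index i j < sample_size (i + j)"
proof -
  have "(j + gap (i + j) / 2) / pool_size i j < 1"
    by (simp add: pool_size_def field_simps)
  then have "real (sample_size (i + j)) * ((j + gap (i + j) / 2) / pool_size i j)
      < real (sample_size (i + j)) * 1"
    using sample_size_pos[OF assms] by (intro mult_strict_left_mono) simp_all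
  then have "real (sample_size (i + j)) * (j + gap (i + j) / 2) / pool_size i j < sample_size (i + j)"
    by simp
  then show ?thesis
    using pivot_index_bounds(1)[of i j] by linarith
qed

lemma mediocre_alg_correct:
  assumes "1 \<le> i + j" and "real (i + j) + 2 * real (i + j) powr (3/4) \<le> real n"
    and "T \<in> set_pmf (mediocre_alg i j)"
  shows "wf_tree n T \<and> (\<forall>p. bij_betw p {..<n} {..<n} \<longrightarrow> mediocre i j (p ` {..<n}) (p (run T p)))"
proof -
  define m where "m = pool_size i j"
  have "m \<le> n" and "i + j < m"
    using pool_size_le[OF assms(1,2)] by (simp_all add: m_def pool_size_def)
  have "set_pmf (pmf_of_set {..<m}) = {..<m}"
    using \<open>i + j < m\<close> by (intro set_pmf_of_set) auto
  then obtain xs where xs: "set xs \<subseteq> {..<m}" "length xs = sample_size (i + j)"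
    and T: "T = tree_of_prog (select_prog m i j (pivot_index i j) xs)"
    using assms(3) by (auto simp: mediocre_alg_def m_def set_replicate_pmf)
  have t: "pivot_index i j < length xs"
    using pivot_index_less[OF assms(1)] xs(2) by simp
  have "wf_tree n T"
    unfolding T using xs(1) t \<open>i + j < m\<close> \<open>m \<le> n\<close>
    by (intro wf_tree_of_prog valid_select_prog) auto
  moreover have "mediocre i j (p ` {..<n}) (p (run T p))" if "bij_betw p {..<n} {..<n}" for p
  proof (rule mediocre_mono)
    have "inj_on p {..<m}"
      using that \<open>m \<le> n\<close> by (meson bij_betw_def inj_on_subset lessThan_subset_iff)
    then show "mediocre i j (p ` {..<m}) (p (run T p))"
      unfolding T run_tree_of_prog using xs(1) t \<open>i + j < m\<close> by (rule select_prog_mediocre)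
    show "p ` {..<m} \<subseteq> p ` {..<n}"
      using \<open>m \<le> n\<close> by auto
  qed simp
  ultimately show ?thesis
    by blast
qed

text \<open>Sorting the sample, verifying the pivot and the fallback weighted by the failure probability,
  estimated with \<open>s \<le> K\<^sup>5\<^sup>/\<^sup>8 + 1\<close> and \<open>m \<le> K + K\<^sup>3\<^sup>/\<^sup>4 + 1\<close>.\<close>

definition cost_bound :: "real \<Rightarrow> real" where
  "cost_bound K = (let s = K powr (5/8) + 1; M = K + K powr (3/4) + 1 in
     s * (log 2 s + 1) + M
     + M * (log 2 M + 1) * (2 * exp (- (K powr (5/8) * (K powr (3/4) - 1)\<^sup>2 / (2 * M\<^sup>2)))))"

lemma eventually_cost_bound_le: "\<forall>\<^sub>F K in at_top. cost_bound K \<le> K + 3 * K powr (3/4)"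
  unfolding cost_bound_def Let_def log_def by real_asymp

lemma select_cost_le_cost_bound:
  assumes "1 \<le> k"
  defines "s \<equiv> sample_size k" and "g \<equiv> gap k" and "m \<equiv> k + 1 + gap k"
  shows "real (s * floorlog 2 s + m)
      + real (m * floorlog 2 m) * (2 * exp (- (real s * (real g)\<^sup>2 / (2 * (real m)\<^sup>2))))
    \<le> cost_bound (real k)"
proof -
  define K where "K = real k"
  define M where "M = K + K powr (3/4) + 1"
  have K: "1 \<le> K powr (3/4)" "1 \<le> K powr (5/8)"
    using assms(1) by (simp_all add: K_def ge_one_powr_ge_zero)
  have s: "K powr (5/8) \<le> s" "s \<le> K powr (5/8) + 1"
    using sample_size_bounds[of k] by (simp_all add: s_def K_def)
  have g: "K powr (3/4) - 1 \<le> g" "g \<le> K powr (3/4)"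
    using gap_bounds[of k] by (simp_all add: g_def K_def)
  have m: "1 \<le> m" "real m \<le> M"
    using g(2) by (simp_all add: m_def M_def K_def g_def)
  have "real (s * floorlog 2 s) \<le> (K powr (5/8) + 1) * (log 2 (K powr (5/8) + 1) + 1)"
    using K(2) s by (intro mult_floorlog_le) simp_all
  moreover have "real (m * floorlog 2 m) \<le> M * (log 2 M + 1)"
    using m by (rule mult_floorlog_le)
  moreover have "K powr (5/8) * (K powr (3/4) - 1)\<^sup>2 / (2 * M\<^sup>2) \<le> real s * (real g)\<^sup>2 / (2 * (real m)\<^sup>2)"
  proof (rule frac_le)
    show "K powr (5/8) * (K powr (3/4) - 1)\<^sup>2 \<le> real s * (real g)\<^sup>2"
      using K s g by (intro mult_mono power_mono) auto
    show "2 * (real m)\<^sup>2 \<le> 2 * M\<^sup>2"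
      using m by (simp add: power_mono)
  qed (use m in auto)
  then have "exp (- (real s * (real g)\<^sup>2 / (2 * (real m)\<^sup>2)))
      \<le> exp (- (K powr (5/8) * (K powr (3/4) - 1)\<^sup>2 / (2 * M\<^sup>2)))"
    by simp
  moreover have "0 \<le> M * (log 2 M + 1)"
    using m by simp
  ultimately have "real (s * floorlog 2 s + m)
      + real (m * floorlog 2 m) * (2 * exp (- (real s * (real g)\<^sup>2 / (2 * (real m)\<^sup>2))))
    \<le> (K powr (5/8) + 1) * (log 2 (K powr (5/8) + 1) + 1) + M
      + M * (log 2 M + 1) * (2 * exp (- (K powr (5/8) * (K powr (3/4) - 1)\<^sup>2 / (2 * M\<^sup>2))))"
    using m(2) by (intro add_mono mult_mono) simp_all
  then show ?thesis
    by (simp add: cost_bound_def Let_def K_def M_def)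
qed

lemma expected_cost_mediocre_alg:
  assumes "1 \<le> i + j" and "real (i + j) + 2 * real (i + j) powr (3/4) \<le> real n"
    and "bij_betw p {..<n} {..<n}"
  shows "(\<integral>\<^sup>+T. ennreal (real (cost T p)) \<partial>measure_pmf (mediocre_alg i j))
    \<le> ennreal (cost_bound (real (i + j)))"
proof -
  define m where "m = pool_size i j"
  have "inj_on p {..<m}"
    using assms(3) pool_size_le[OF assms(1,2)]
    by (metis m_def bij_betw_def inj_on_subset lessThan_subset_iff)
  have "(\<integral>\<^sup>+T. ennreal (real (cost T p)) \<partial>measure_pmf (mediocre_alg i j))
      = (\<integral>\<^sup>+xs. ennreal (real (cost_prog (select_prog m i j (pivot_index i j) xs) p))
          \<partial>measure_pmf (replicate_pmf (sample_size (i + j)) (pmf_of_set {..<m})))"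
    by (simp add: mediocre_alg_def m_def)
  also have "\<dots> \<le> ennreal (real (sample_size (i + j) * floorlog 2 (sample_size (i + j)) + m)
      + real (m * floorlog 2 m) * (2 * exp (- (real (sample_size (i + j)) * (real (gap (i + j)))\<^sup>2
          / (2 * (real m)\<^sup>2)))))"
    using pivot_index_bounds[of i j, folded m_def]
    by (intro expected_cost_select_prog \<open>inj_on p {..<m}\<close> sample_size_pos pivot_index_less assms(1))
      (simp_all add: m_def pool_size_def)
  also have "\<dots> \<le> ennreal (cost_bound (real (i + j)))"
    using select_cost_le_cost_bound[OF assms(1)] by (intro ennreal_leI) (simp add: m_def pool_size_def)
  finally show ?thesis .
qed

theorem theorem2:
  "\<exists>A :: nat \<Rightarrow> nat \<Rightarrow> nat \<Rightarrow> dtree pmf.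
     (\<forall>n i j. 1 \<le> i \<and> 1 \<le> j \<and> real (i + j) + 2 * real (i + j) powr (3/4) \<le> real n \<longrightarrow>
        (\<forall>T \<in> set_pmf (A n i j). wf_tree n T \<and>
           (\<forall>p. bij_betw p {..<n} {..<n} \<longrightarrow> mediocre i j (p ` {..<n}) (p (run T p))))) \<and>
     (\<exists>C N. \<forall>n i j p. 1 \<le> i \<and> 1 \<le> j \<and> real (i + j) + 2 * real (i + j) powr (3/4) \<le> real n
        \<and> N \<le> i + j \<and> bij_betw p {..<n} {..<n} \<longrightarrow>
        (\<integral>\<^sup>+ T. ennreal (real (cost T p)) \<partial>(measure_pmf (A n i j)))
          \<le> ennreal (real (i + j) + C * real (i + j) powr (3/4)))"
proof -
  obtain N where N: "\<And>K. N \<le> K \<Longrightarrow> cost_bound K \<le> K + 3 * K powr (3/4)"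
    using eventually_cost_bound_le by (auto simp: eventually_at_top_linorder)
  have correct: "wf_tree n T \<and>
      (\<forall>p. bij_betw p {..<n} {..<n} \<longrightarrow> mediocre i j (p ` {..<n}) (p (run T p)))"
    if "1 \<le> i" "real (i + j) + 2 * real (i + j) powr (3/4) \<le> real n"
      "T \<in> set_pmf (mediocre_alg i j)" for n i j T
    using that by (intro mediocre_alg_correct) simp_all
  have cost: "(\<integral>\<^sup>+ T. ennreal (real (cost T p)) \<partial>(measure_pmf (mediocre_alg i j)))
      \<le> ennreal (real (i + j) + 3 * real (i + j) powr (3/4))"
    if "1 \<le> i" "real (i + j) + 2 * real (i + j) powr (3/4) \<le> real n" "nat \<lceil>N\<rceil> \<le> i + j"
      "bij_betw p {..<n} {..<n}" for n i j p
  proof -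
    have "(\<integral>\<^sup>+ T. ennreal (real (cost T p)) \<partial>(measure_pmf (mediocre_alg i j)))
        \<le> ennreal (cost_bound (real (i + j)))"
      using that by (intro expected_cost_mediocre_alg) simp_all
    also have "\<dots> \<le> ennreal (real (i + j) + 3 * real (i + j) powr (3/4))"
      using that(3) by (intro ennreal_leI N) linarith
    finally show ?thesis .
  qed
  show ?thesis
    using correct cost by (intro exI[of _ "\<lambda>_. mediocre_alg"] conjI exI[of _ 3] exI[of _ "nat \<lceil>N\<rceil>"]) blast+
qed

end
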